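(* Let $(X,\le)$ be a globally hyperbolic poset. The set of closed intervals $\mathbf{I}X=\{[a,b]: a,b\in X,\ a\le b\}$, ordered by reverse inclusion ($[a,b]\sqsubseteq[c,d]$ iff $[c,d]\subseteq[a,b]$), is a continuous dcpo (domain), and its way-below relation is given by $[a,b]\ll[c,d]$ iff $a\ll c$ and $d\ll b$ (the latter computed in $(X,\le)$). The space $X$ (with its interval topology) has a countable basis iff $\mathbf{I}X$ is $\omega$-continuous. Finally, $\max(\mathbf{I}X)$, with the relative Scott topology inherited from $\mathbf{I}X$, is homeomorphic to $X$ with its interval topology (via $x\mapsto[x,x]$).
   Context: For a poset $(P,\sqsubseteq)$: a nonempty $S\subseteq P$ is directed if any two elements of $S$ have an upper bound in $S$, and filtered if any two have a lower bound in $S$; $\bigsqcup S$, $\bigwedge S$ denote supremum and infimum when they exist. For $x,y\in P$, $x\ll y$ iff for every directed $S\subseteq P$ that has a supremum, $y\sqsubseteq\bigsqcup S$ implies $x\sqsubseteq s$ for some $s\in S$. Put $\Downarrow x=\{a: a\ll x\}$, $\Uparrow x=\{a: x\ll a\}$. A basis of $P$ is a subset $B$ such that for every $x$, $B\cap\Downarrow x$ contains a directed set with supremum $x$; $P$ is continuous if it has a basis and $\omega$-continuous if it has a countable basis. A dcpo is a poset in which every directed set has a supremum; a continuous dcpo (domain) is a continuous poset that is a dcpo. $\max(P)=\{x: \text{there is no } y\neq x \text{ with } x\sqsubseteq y\}$. The Scott topology consists of upper sets $U$ such that for each directed $S$ with a supremum, $\bigsqcup S\in U$ implies $S\cap U\neq\emptyset$.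 A continuous poset $P$ is bicontinuous if (1) for all $x,y$: $x\ll y$ iff for every filtered $S\subseteq P$ having an infimum, $\bigwedge S\sqsubseteq x$ implies $s\sqsubseteq y$ for some $s\in S$; and (2) for every $x$, $\Uparrow x$ is filtered with infimum $x$. On a bicontinuous poset the sets $(a,b)=\{x:a\ll x\ll b\}$ form a basis for the interval topology. A globally hyperbolic poset is a bicontinuous poset $(X,\le)$ in which every closed interval $[a,b]=\{x:a\le x\le b\}$ is compact in the interval topology. *)

theory Defs
  imports "HOL-Analysis.Analysis"
begin

definition directed :: "'b set \<Rightarrow> ('b \<Rightarrow> 'b \<Rightarrow> bool) \<Rightarrow> 'b set \<Rightarrow> bool" where
  "directed P le S \<longleftrightarrow> S \<subseteq> P \<and> S \<noteq> {} \<and> (\<forall>x\<in>S. \<forall>y\<in>S. \<exists>z\<in>S. le x z \<and> le y z)"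

definition filtered :: "'b set \<Rightarrow> ('b \<Rightarrow> 'b \<Rightarrow> bool) \<Rightarrow> 'b set \<Rightarrow> bool" where
  "filtered P le S \<longleftrightarrow> S \<subseteq> P \<and> S \<noteq> {} \<and> (\<forall>x\<in>S. \<forall>y\<in>S. \<exists>z\<in>S. le z x \<and> le z y)"

definition is_sup :: "'b set \<Rightarrow> ('b \<Rightarrow> 'b \<Rightarrow> bool) \<Rightarrow> 'b set \<Rightarrow> 'b \<Rightarrow> bool" where
  "is_sup P le S s \<longleftrightarrow> s \<in> P \<and> (\<forall>x\<in>S. le x s) \<and> (\<forall>u\<in>P. (\<forall>x\<in>S. le x u) \<longrightarrow> le s u)"

definition is_inf :: "'b set \<Rightarrow> ('b \<Rightarrow> 'b \<Rightarrow> bool) \<Rightarrow> 'b set \<Rightarrow> 'b \<Rightarrow> bool" where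
  "is_inf P le S s \<longleftrightarrow> s \<in> P \<and> (\<forall>x\<in>S. le s x) \<and> (\<forall>u\<in>P. (\<forall>x\<in>S. le u x) \<longrightarrow> le u s)"

definition way_below :: "'b set \<Rightarrow> ('b \<Rightarrow> 'b \<Rightarrow> bool) \<Rightarrow> 'b \<Rightarrow> 'b \<Rightarrow> bool" where
  "way_below P le x y \<longleftrightarrow>
     (\<forall>S s. directed P le S \<and> is_sup P le S s \<and> le y s \<longrightarrow> (\<exists>z\<in>S. le x z))"

definition wb_down :: "'b set \<Rightarrow> ('b \<Rightarrow> 'b \<Rightarrow> bool) \<Rightarrow> 'b \<Rightarrow> 'b set" where
  "wb_down P le x = {a\<in>P. way_below P le a x}"

definition wb_up :: "'b set \<Rightarrow> ('b \<Rightarrow> 'b \<Rightarrow> bool) \<Rightarrow> 'b \<Rightarrow> 'b set" where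
  "wb_up P le x = {a\<in>P. way_below P le x a}"

definition is_basis :: "'b set \<Rightarrow> ('b \<Rightarrow> 'b \<Rightarrow> bool) \<Rightarrow> 'b set \<Rightarrow> bool" where
  "is_basis P le B \<longleftrightarrow> B \<subseteq> P \<and>
     (\<forall>x\<in>P. \<exists>S. S \<subseteq> B \<inter> wb_down P le x \<and> directed P le S \<and> is_sup P le S x)"

definition continuous_poset :: "'b set \<Rightarrow> ('b \<Rightarrow> 'b \<Rightarrow> bool) \<Rightarrow> bool" where
  "continuous_poset P le \<longleftrightarrow> (\<exists>B. is_basis P le B)"

definition omega_continuous :: "'b set \<Rightarrow> ('b \<Rightarrow> 'b \<Rightarrow> bool) \<Rightarrow> bool" where
  "omega_continuous P le \<longleftrightarrow> (\<exists>B. countable B \<and> is_basis P le B)"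

definition dcpo :: "'b set \<Rightarrow> ('b \<Rightarrow> 'b \<Rightarrow> bool) \<Rightarrow> bool" where
  "dcpo P le \<longleftrightarrow> (\<forall>S. directed P le S \<longrightarrow> (\<exists>s. is_sup P le S s))"

definition continuous_dcpo :: "'b set \<Rightarrow> ('b \<Rightarrow> 'b \<Rightarrow> bool) \<Rightarrow> bool" where
  "continuous_dcpo P le \<longleftrightarrow> continuous_poset P le \<and> dcpo P le"

definition maxel :: "'b set \<Rightarrow> ('b \<Rightarrow> 'b \<Rightarrow> bool) \<Rightarrow> 'b set" where
  "maxel P le = {x\<in>P. \<not> (\<exists>y\<in>P. y \<noteq> x \<and> le x y)}"

definition scott_open :: "'b set \<Rightarrow> ('b \<Rightarrow> 'b \<Rightarrow> bool) \<Rightarrow> 'b set \<Rightarrow> bool" where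
  "scott_open P le U \<longleftrightarrow> U \<subseteq> P \<and> (\<forall>x\<in>U. \<forall>y\<in>P. le x y \<longrightarrow> y \<in> U) \<and>
     (\<forall>S s. directed P le S \<and> is_sup P le S s \<and> s \<in> U \<longrightarrow> S \<inter> U \<noteq> {})"

lemma scott_openI:
  assumes "U \<subseteq> P" "\<And>x y. x \<in> U \<Longrightarrow> y \<in> P \<Longrightarrow> le x y \<Longrightarrow> y \<in> U"
    "\<And>S s. directed P le S \<Longrightarrow> is_sup P le S s \<Longrightarrow> s \<in> U \<Longrightarrow> S \<inter> U \<noteq> {}"
  shows "scott_open P le U"
  unfolding scott_open_def using assms by blast

lemma scott_openD:
  assumes "scott_open P le U"
  shows "U \<subseteq> P" "\<And>x y. x \<in> U \<Longrightarrow> y \<in> P \<Longrightarrow> le x y \<Longrightarrow> y \<in> U"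
    "\<And>S s. directed P le S \<Longrightarrow> is_sup P le S s \<Longrightarrow> s \<in> U \<Longrightarrow> S \<inter> U \<noteq> {}"
  using assms unfolding scott_open_def by blast+

lemma istopology_scott_open: "istopology (scott_open P le)"
  unfolding istopology_def
proof (intro conjI allI impI)
  fix U V assume U: "scott_open P le U" and V: "scott_open P le V"
  show "scott_open P le (U \<inter> V)"
  proof (rule scott_openI)
    show "U \<inter> V \<subseteq> P" using scott_openD(1)[OF U] by blast
  next
    fix x y assume "x \<in> U \<inter> V" "y \<in> P" "le x y"
    then show "y \<in> U \<inter> V" using scott_openD(2)[OF U] scott_openD(2)[OF V] by blast
  next
    fix S s assume H: "directed P le S" "is_sup P le S s" "s \<in> U \<inter> V"
    obtain a where a: "a \<in> S" "a \<in> U" using scott_openD(3)[OF U H(1,2)] H(3) by blast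
    obtain b where b: "b \<in> S" "b \<in> V" using scott_openD(3)[OF V H(1,2)] H(3) by blast
    have "\<exists>c\<in>S. le a c \<and> le b c" using H(1) a(1) b(1) unfolding directed_def by blast
    then obtain c where c: "c \<in> S" "le a c" "le b c" by blast
    have cP: "c \<in> P" using H(1) c(1) unfolding directed_def by blast
    have "c \<in> U" using scott_openD(2)[OF U a(2) cP c(2)] .
    moreover have "c \<in> V" using scott_openD(2)[OF V b(2) cP c(3)] .
    ultimately show "S \<inter> (U \<inter> V) \<noteq> {}" using c(1) by blast
  qed
next
  fix K assume K: "\<forall>U\<in>K. scott_open P le U"
  show "scott_open P le (\<Union>K)"
  proof (rule scott_openI)
    show "\<Union>K \<subseteq> P"
    proof
      fix x assume "x \<in> \<Union>K"
      then obtain U where U: "U \<in> K" "x \<in> U" by (rule UnionE)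
      have "scott_open P le U" using K U(1) by (rule bspec)
      then show "x \<in> P" using U(2) by (blast dest: scott_openD(1))
    qed
  next
    fix x y assume xy: "x \<in> \<Union>K" "y \<in> P" "le x y"
    obtain U where U: "U \<in> K" "x \<in> U" using xy(1) by (rule UnionE)
    have "scott_open P le U" using K U(1) by (rule bspec)
    then have "y \<in> U" using U(2) xy(2,3) by (rule scott_openD(2))
    then show "y \<in> \<Union>K" using U(1) by (rule UnionI[rotated])
  next
    fix S s assume H: "directed P le S" "is_sup P le S s" "s \<in> \<Union>K"
    obtain U where U: "U \<in> K" "s \<in> U" using H(3) by (rule UnionE)
    have "scott_open P le U" using K U(1) by (rule bspec)
    then have "S \<inter> U \<noteq> {}" using H(1,2) U(2) by (rule scott_openD(3))
    then show "S \<inter> \<Union>K \<noteq> {}" using U(1) by auto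
  qed
qed

definition scott_topology :: "'b set \<Rightarrow> ('b \<Rightarrow> 'b \<Rightarrow> bool) \<Rightarrow> 'b topology" where
  "scott_topology P le = topology (scott_open P le)"

lemma openin_scott_topology: "openin (scott_topology P le) U \<longleftrightarrow> scott_open P le U"
  by (simp add: scott_topology_def topology_inverse'[OF istopology_scott_open])

abbreviation wbX :: "'a::order \<Rightarrow> 'a \<Rightarrow> bool" where
  "wbX x y \<equiv> way_below UNIV (\<le>) x y"

definition bicontinuous :: "'a::order itself \<Rightarrow> bool" where
  "bicontinuous _ \<longleftrightarrow> continuous_poset (UNIV::'a set) (\<le>) \<and>
     (\<forall>x y::'a. wbX x y \<longleftrightarrow>
        (\<forall>S s. filtered UNIV (\<le>) S \<and> is_inf UNIV (\<le>) S s \<and> s \<le> x \<longrightarrow> (\<exists>z\<in>S. z \<le> y))) \<and>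
     (\<forall>x::'a. filtered UNIV (\<le>) (wb_up UNIV (\<le>) x) \<and> is_inf UNIV (\<le>) (wb_up UNIV (\<le>) x) x)"

definition interval_topology :: "'a::order topology" where
  "interval_topology = topology_generated_by {{x. wbX a x \<and> wbX x b} | a b. True}"

definition globally_hyperbolic :: "'a::order itself \<Rightarrow> bool" where
  "globally_hyperbolic T \<longleftrightarrow> bicontinuous T \<and>
     (\<forall>a b::'a. compactin interval_topology {a..b})"

definition IX :: "'a::order set set" where
  "IX = {{a..b} | a b. a \<le> b}"

definition rev_incl :: "'a set \<Rightarrow> 'a set \<Rightarrow> bool" where
  "rev_incl A B \<longleftrightarrow> B \<subseteq> A"

end

theory Submission
  imports Defs
begin

(*
  Condition (1) of bicontinuity says that the way-below relation of the order dual of X is the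
  converse of that of X, and condition (2) then says that the dual is continuous as well; so
  interpolation and the density arguments are proved once for an abstract continuous preorder and
  transported to the dual. Principal up- and down-sets are closed in the interval topology, hence
  compactness of the closed intervals yields, by the finite intersection property, suprema of
  bounded directed sets and infima of bounded filtered sets. Therefore a directed family of
  intervals [a_i, b_i] has supremum [sup a_i, inf b_i], which gives [a, b] << [c, d] iff a << c and
  d << b. The intervals [p, q] with p << c, d << q and p, q taken from any <<-dense set Q
  approximate [c, d]: Q = X shows that IX is a domain, and a countable dense Q (from second
  countability) gives a countable basis. Conversely the open intervals (u, v) with [u, v] in a
  countable basis of IX form a countable base of X. The maximal elements of IX are the intervals
  [x, x], and the image of an open set W of X is their intersection with the Scott-open set of
  intervals [c, d] such that a << c and d << b for some (a, b) contained in W.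
*)

section \<open>Continuous preorders\<close>

lemma directed_converse: "directed P (\<lambda>x y. le y x) S \<longleftrightarrow> filtered P le S"
  unfolding directed_def filtered_def by simp

lemma is_sup_converse: "is_sup P (\<lambda>x y. le y x) S s \<longleftrightarrow> is_inf P le S s"
  unfolding is_sup_def is_inf_def by simp

lemma is_sup_unique:
  assumes "is_sup P le S s" "is_sup P le S t" "le s t \<Longrightarrow> le t s \<Longrightarrow> s = t"
  shows "s = t"
  using assms unfolding is_sup_def by blast

lemma way_belowD:
  "way_below P le x y \<Longrightarrow> directed P le S \<Longrightarrow> is_sup P le S s \<Longrightarrow> le y s \<Longrightarrow> \<exists>z\<in>S. le x z"
  unfolding way_below_def by blast

context partial_preordering
begin

lemma way_below_imp_le:
  assumes "way_below P (\<^bold>\<le>) x y" "y \<in> P"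
  shows "x \<^bold>\<le> y"
proof -
  have "directed P (\<^bold>\<le>) {y}" "is_sup P (\<^bold>\<le>) {y} y"
    using assms(2) unfolding directed_def is_sup_def by (auto intro: refl)
  then show ?thesis
    using way_belowD[OF assms(1)] refl by blast
qed

lemma way_below_mono_left: "x \<^bold>\<le> y \<Longrightarrow> way_below P (\<^bold>\<le>) y z \<Longrightarrow> way_below P (\<^bold>\<le>) x z"
  unfolding way_below_def by (meson trans)

lemma way_below_mono_right: "way_below P (\<^bold>\<le>) x y \<Longrightarrow> y \<^bold>\<le> z \<Longrightarrow> way_below P (\<^bold>\<le>) x z"
  unfolding way_below_def by (meson trans)

lemma directed_finite_upper_bound:
  assumes "directed P (\<^bold>\<le>) S" "finite F" "F \<subseteq> S" "s \<in> S"
  shows "\<exists>z\<in>S. s \<^bold>\<le> z \<and> (\<forall>x\<in>F. x \<^bold>\<le> z)"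
  using assms(2,3)
proof (induction F rule: finite_induct)
  case empty
  then show ?case using assms(4) refl by blast
next
  case (insert x F)
  then obtain z where z: "z \<in> S" "s \<^bold>\<le> z" "\<forall>y\<in>F. y \<^bold>\<le> z" by auto
  obtain w where "w \<in> S" "x \<^bold>\<le> w" "z \<^bold>\<le> w"
    using assms(1) insert.prems z(1) unfolding directed_def by blast
  then show ?case using z by (blast intro: trans)
qed

lemma bounded_directed_has_sup:
  assumes S: "directed UNIV (\<^bold>\<le>) S" and b: "\<forall>s\<in>S. s \<^bold>\<le> b"
    and closed_up: "\<And>x. closedin X {z. x \<^bold>\<le> z}"
    and closed_down: "\<And>x. closedin X {z. z \<^bold>\<le> x}"
    and compact: "\<And>a b. compactin X {z. a \<^bold>\<le> z \<and> z \<^bold>\<le> b}"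
  shows "\<exists>x. is_sup UNIV (\<^bold>\<le>) S x"
proof -
  obtain s0 where s0: "s0 \<in> S" using S unfolding directed_def by blast
  define L where "L = (\<Inter>u\<in>{u. \<forall>s\<in>S. s \<^bold>\<le> u}. {z. z \<^bold>\<le> u})"
  have "closedin X L"
    unfolding L_def using b closed_down by (intro closedin_Inter) auto
  define \<U> where "\<U> = (\<lambda>s. {z. s \<^bold>\<le> z} \<inter> L) ` S"
  \<comment> \<open>A point of \<open>\<Inter>\<U>\<close> is an upper bound of \<open>S\<close> below all upper bounds.\<close>
  have "{z. s0 \<^bold>\<le> z \<and> z \<^bold>\<le> b} \<inter> \<Inter>\<U> \<noteq> {}"
  proof (rule compact[unfolded compactin_fip, THEN conjunct2, rule_format], intro conjI allI impI ballI)
    fix C assume "C \<in> \<U>"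
    then show "closedin X C"
      unfolding \<U>_def using \<open>closedin X L\<close> closed_up by auto
  next
    fix \<F> assume "finite \<F> \<and> \<F> \<subseteq> \<U>"
    then obtain F where F: "F \<subseteq> S" "finite F" "\<F> = (\<lambda>s. {z. s \<^bold>\<le> z} \<inter> L) ` F"
      unfolding \<U>_def by (meson finite_subset_image)
    obtain z where z: "z \<in> S" "s0 \<^bold>\<le> z" "\<forall>x\<in>F. x \<^bold>\<le> z"
      using directed_finite_upper_bound[OF S F(2,1) s0] by blast
    have "z \<in> L" unfolding L_def using z(1) by blast
    then have "z \<in> {z. s0 \<^bold>\<le> z \<and> z \<^bold>\<le> b} \<inter> \<Inter>\<F>" using z b F(3) by auto
    then show "{z. s0 \<^bold>\<le> z \<and> z \<^bold>\<le> b} \<inter> \<Inter>\<F> \<noteq> {}" by blast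
  qed
  then obtain x where x: "x \<in> \<Inter>\<U>" by blast
  have "is_sup UNIV (\<^bold>\<le>) S x"
    unfolding is_sup_def using x s0 unfolding \<U>_def L_def by blast
  then show ?thesis by blast
qed

end

locale continuous_preordering = partial_preordering +
  assumes directed_wb_down: "directed UNIV (\<^bold>\<le>) (wb_down UNIV (\<^bold>\<le>) x)"
    and is_sup_wb_down: "is_sup UNIV (\<^bold>\<le>) (wb_down UNIV (\<^bold>\<le>) x) x"
begin

abbreviation way_below_rel (infix "\<lless>" 50) where
  "x \<lless> y \<equiv> way_below UNIV (\<^bold>\<le>) x y"

lemma way_below_le: "x \<lless> y \<Longrightarrow> x \<^bold>\<le> y"
  using way_below_imp_le by blast

lemma ex_way_below: "\<exists>a. a \<lless> x"
  using directed_wb_down[of x] unfolding directed_def wb_down_def by blast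

lemma way_below_upper_bound:
  "a \<lless> x \<Longrightarrow> b \<lless> x \<Longrightarrow> \<exists>c. a \<^bold>\<le> c \<and> b \<^bold>\<le> c \<and> c \<lless> x"
  using directed_wb_down[of x] unfolding directed_def wb_down_def by blast

lemma way_below_not_le: "\<not> x \<^bold>\<le> u \<Longrightarrow> \<exists>a. a \<lless> x \<and> \<not> a \<^bold>\<le> u"
  using is_sup_wb_down[of x] unfolding is_sup_def wb_down_def by blast

lemma directed_Union_wb_down:
  "directed UNIV (\<^bold>\<le>) (\<Union>c\<in>wb_down UNIV (\<^bold>\<le>) x. wb_down UNIV (\<^bold>\<le>) c)"
  (is "directed UNIV (\<^bold>\<le>) ?D")
  unfolding directed_def
proof (intro conjI ballI)
  obtain c d where "c \<lless> x" "d \<lless> c"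
    using ex_way_below by metis
  then show "?D \<noteq> {}"
    unfolding wb_down_def by blast
next
  fix d1 d2 assume "d1 \<in> ?D" "d2 \<in> ?D"
  then obtain c1 c2 where d: "d1 \<lless> c1" "c1 \<lless> x" "d2 \<lless> c2" "c2 \<lless> x"
    unfolding wb_down_def by blast
  then obtain c where c: "c1 \<^bold>\<le> c" "c2 \<^bold>\<le> c" "c \<lless> x"
    using way_below_upper_bound by blast
  have "d1 \<lless> c" "d2 \<lless> c"
    using way_below_mono_right[OF d(1) c(1)] way_below_mono_right[OF d(3) c(2)] .
  then obtain e where "d1 \<^bold>\<le> e" "d2 \<^bold>\<le> e" "e \<lless> c"
    using way_below_upper_bound by blast
  then show "\<exists>e\<in>?D. d1 \<^bold>\<le> e \<and> d2 \<^bold>\<le> e"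
    using c(3) unfolding wb_down_def by blast
qed simp

lemma is_sup_Union_wb_down:
  "is_sup UNIV (\<^bold>\<le>) (\<Union>c\<in>wb_down UNIV (\<^bold>\<le>) x. wb_down UNIV (\<^bold>\<le>) c) x"
  unfolding is_sup_def
proof (intro conjI ballI impI)
  fix d assume "d \<in> (\<Union>c\<in>wb_down UNIV (\<^bold>\<le>) x. wb_down UNIV (\<^bold>\<le>) c)"
  then obtain c where "d \<lless> c" "c \<lless> x"
    unfolding wb_down_def by blast
  then show "d \<^bold>\<le> x"
    using trans[OF way_below_le way_below_le] by blast
next
  fix u assume "\<forall>d\<in>(\<Union>c\<in>wb_down UNIV (\<^bold>\<le>) x. wb_down UNIV (\<^bold>\<le>) c). d \<^bold>\<le> u"
  then have "c \<^bold>\<le> u" if "c \<lless> x" for c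
    using is_sup_wb_down[of c] that unfolding is_sup_def wb_down_def by blast
  then show "x \<^bold>\<le> u"
    using is_sup_wb_down[of x] unfolding is_sup_def wb_down_def by blast
qed simp

lemma way_below_interpolate:
  assumes "a \<lless> x"
  shows "\<exists>z. a \<lless> z \<and> z \<lless> x"
proof -
  obtain d where "d \<in> (\<Union>c\<in>wb_down UNIV (\<^bold>\<le>) x. wb_down UNIV (\<^bold>\<le>) c)" "a \<^bold>\<le> d"
    using way_belowD[OF assms directed_Union_wb_down is_sup_Union_wb_down refl] by blast
  then obtain c where "a \<^bold>\<le> d" "d \<lless> c" "c \<lless> x"
    unfolding wb_down_def by blast
  then show ?thesis
    using way_below_mono_left by metis
qed

context
  fixes Q
  assumes dense: "\<And>a x. a \<lless> x \<Longrightarrow> \<exists>q\<in>Q. a \<lless> q \<and> q \<lless> x"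
begin

lemma directed_dense_wb_down: "directed UNIV (\<^bold>\<le>) (Q \<inter> wb_down UNIV (\<^bold>\<le>) x)"
  unfolding directed_def
proof (intro conjI ballI)
  obtain a where "a \<lless> x"
    using ex_way_below by blast
  then obtain q where "q \<in> Q" "q \<lless> x"
    using dense by blast
  then show "Q \<inter> wb_down UNIV (\<^bold>\<le>) x \<noteq> {}"
    unfolding wb_down_def by blast
next
  fix q1 q2 assume "q1 \<in> Q \<inter> wb_down UNIV (\<^bold>\<le>) x" "q2 \<in> Q \<inter> wb_down UNIV (\<^bold>\<le>) x"
  then obtain c where c: "q1 \<^bold>\<le> c" "q2 \<^bold>\<le> c" "c \<lless> x"
    using way_below_upper_bound unfolding wb_down_def by blast
  obtain q where q: "q \<in> Q" "c \<lless> q" "q \<lless> x"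
    using dense c(3) by blast
  have "q1 \<^bold>\<le> q" "q2 \<^bold>\<le> q"
    using c(1,2) q(2) way_below_le trans by blast+
  then show "\<exists>z\<in>Q \<inter> wb_down UNIV (\<^bold>\<le>) x. q1 \<^bold>\<le> z \<and> q2 \<^bold>\<le> z"
    using q unfolding wb_down_def by blast
qed simp

lemma is_sup_dense_wb_down: "is_sup UNIV (\<^bold>\<le>) (Q \<inter> wb_down UNIV (\<^bold>\<le>) x) x"
  unfolding is_sup_def
proof (intro conjI ballI impI)
  fix q assume "q \<in> Q \<inter> wb_down UNIV (\<^bold>\<le>) x"
  then show "q \<^bold>\<le> x"
    unfolding wb_down_def using way_below_le by blast
next
  fix u assume u: "\<forall>q\<in>Q \<inter> wb_down UNIV (\<^bold>\<le>) x. q \<^bold>\<le> u"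
  show "x \<^bold>\<le> u"
  proof (rule ccontr)
    assume "\<not> x \<^bold>\<le> u"
    then obtain a where a: "a \<lless> x" "\<not> a \<^bold>\<le> u"
      using way_below_not_le by blast
    then obtain q where "q \<in> Q" "a \<lless> q" "q \<lless> x"
      using dense by blast
    then have "a \<^bold>\<le> q" "q \<^bold>\<le> u"
      using u way_below_le unfolding wb_down_def by blast+
    then show False
      using a(2) trans by blast
  qed
qed simp

end

end

lemma (in partial_preordering) continuous_preordering_if_continuous_poset:
  assumes "continuous_poset UNIV (\<^bold>\<le>)"
  shows "continuous_preordering (\<^bold>\<le>)"
proof unfold_locales
  fix x
  obtain S where S: "S \<subseteq> wb_down UNIV (\<^bold>\<le>) x" "directed UNIV (\<^bold>\<le>) S" "is_sup UNIV (\<^bold>\<le>) S x"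
    using assms unfolding continuous_poset_def is_basis_def by blast
  show "directed UNIV (\<^bold>\<le>) (wb_down UNIV (\<^bold>\<le>) x)"
    unfolding directed_def
  proof (intro conjI ballI)
    show "wb_down UNIV (\<^bold>\<le>) x \<noteq> {}" using S(1,2) unfolding directed_def by blast
  next
    fix a b assume "a \<in> wb_down UNIV (\<^bold>\<le>) x" "b \<in> wb_down UNIV (\<^bold>\<le>) x"
    then obtain s t where "s \<in> S" "a \<^bold>\<le> s" "t \<in> S" "b \<^bold>\<le> t"
      using way_belowD[OF _ S(2,3) refl] unfolding wb_down_def by blast
    moreover obtain u where "u \<in> S" "s \<^bold>\<le> u" "t \<^bold>\<le> u"
      using S(2) calculation unfolding directed_def by blast
    ultimately show "\<exists>c\<in>wb_down UNIV (\<^bold>\<le>) x. a \<^bold>\<le> c \<and> b \<^bold>\<le> c"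
      using S(1) by (blast intro: trans)
  qed simp
  show "is_sup UNIV (\<^bold>\<le>) (wb_down UNIV (\<^bold>\<le>) x) x"
    using S(1,3) way_below_imp_le unfolding is_sup_def wb_down_def by blast
qed

section \<open>Bicontinuous posets and the interval topology\<close>

locale bicontinuous_order =
  fixes T :: "'a::order itself"
  assumes bicontinuous: "bicontinuous T"
begin

lemma way_below_converse: "way_below UNIV (\<ge>) y x \<longleftrightarrow> wbX x (y::'a)"
  using bicontinuous
  unfolding bicontinuous_def way_below_def directed_converse is_sup_converse by blast

lemma wb_down_converse: "wb_down UNIV (\<ge>) x = wb_up UNIV (\<le>) (x::'a)"
  unfolding wb_down_def wb_up_def way_below_converse ..

lemma filtered_wb_up: "filtered UNIV (\<le>) (wb_up UNIV (\<le>) (x::'a))"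
  and is_inf_wb_up: "is_inf UNIV (\<le>) (wb_up UNIV (\<le>) x) x"
  using bicontinuous unfolding bicontinuous_def by blast+

sublocale lower: continuous_preordering "(\<le>) :: 'a \<Rightarrow> 'a \<Rightarrow> bool"
  using bicontinuous unfolding bicontinuous_def
  by (blast intro: order.continuous_preordering_if_continuous_poset)

sublocale upper: continuous_preordering "(\<ge>) :: 'a \<Rightarrow> 'a \<Rightarrow> bool"
  by unfold_locales
    (auto simp: wb_down_converse directed_converse is_sup_converse filtered_wb_up is_inf_wb_up)

lemma way_below_filteredD:
  "wbX x y \<Longrightarrow> filtered UNIV (\<le>) S \<Longrightarrow> is_inf UNIV (\<le>) S s \<Longrightarrow> s \<le> x \<Longrightarrow> \<exists>z\<in>S. z \<le> (y::'a)"
  using way_belowD[of UNIV "(\<ge>)" y x S s]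
  by (simp add: way_below_converse directed_converse is_sup_converse)

lemma ex_way_above: "\<exists>b. wbX (x::'a) b"
  using upper.ex_way_below[of x] by (simp add: way_below_converse)

lemma way_above_lower_bound: "wbX x a \<Longrightarrow> wbX x b \<Longrightarrow> \<exists>c. c \<le> a \<and> c \<le> b \<and> wbX (x::'a) c"
  using upper.way_below_upper_bound[of a x b] by (simp add: way_below_converse)

lemma way_above_not_le: "\<not> u \<le> x \<Longrightarrow> \<exists>b. wbX x b \<and> \<not> u \<le> (b::'a)"
  using upper.way_below_not_le[of u x] by (simp add: way_below_converse)

lemma way_above_interpolate: "wbX x b \<Longrightarrow> \<exists>z. wbX x z \<and> wbX z (b::'a)"
  using upper.way_below_interpolate[of b x] by (auto simp: way_below_converse)

context
  fixes Q :: "'a set"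
  assumes dense: "\<And>a x. wbX a x \<Longrightarrow> \<exists>q\<in>Q. wbX a q \<and> wbX q x"
begin

lemma filtered_dense_wb_up: "filtered UNIV (\<le>) (Q \<inter> wb_up UNIV (\<le>) x)"
proof -
  have "directed UNIV (\<ge>) (Q \<inter> wb_down UNIV (\<ge>) x)"
    by (rule upper.directed_dense_wb_down) (use dense in \<open>auto simp: way_below_converse\<close>)
  then show ?thesis
    by (simp add: wb_down_converse directed_converse)
qed

lemma is_inf_dense_wb_up: "is_inf UNIV (\<le>) (Q \<inter> wb_up UNIV (\<le>) x) x"
proof -
  have "is_sup UNIV (\<ge>) (Q \<inter> wb_down UNIV (\<ge>) x) x"
    by (rule upper.is_sup_dense_wb_down) (use dense in \<open>auto simp: way_below_converse\<close>)
  then show ?thesis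
    by (simp add: wb_down_converse is_sup_converse)
qed

end

end

definition open_interval :: "'a::order \<Rightarrow> 'a \<Rightarrow> 'a set" where
  "open_interval a b = {x. wbX a x \<and> wbX x b}"

lemma openin_open_interval: "openin interval_topology (open_interval a b)"
  unfolding interval_topology_def open_interval_def by (rule topology_generated_by_Basis) blast

context bicontinuous_order
begin

lemma open_interval_mono: "a \<le> c \<Longrightarrow> d \<le> b \<Longrightarrow> open_interval c d \<subseteq> open_interval a (b::'a)"
  unfolding open_interval_def using lower.way_below_mono_left lower.way_below_mono_right by blast

lemma ex_open_interval: "\<exists>a b. (x::'a) \<in> open_interval a b"
proof -
  obtain a b where "wbX a x" "wbX x b"
    using lower.ex_way_below ex_way_above by metis
  then show ?thesis unfolding open_interval_def by blast
qed

lemma topspace_interval_topology: "topspace (interval_topology :: 'a topology) = UNIV"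
proof -
  have "x \<in> \<Union>{{x. wbX a x \<and> wbX x b} | a b. True}" for x :: 'a
    using ex_open_interval[of x] unfolding open_interval_def by blast
  then show ?thesis
    unfolding interval_topology_def topology_generated_by_topspace by blast
qed

lemma open_interval_neighbourhood:
  assumes "openin interval_topology W" "(x::'a) \<in> W"
  shows "\<exists>a b. x \<in> open_interval a b \<and> open_interval a b \<subseteq> W"
proof -
  have "generate_topology_on {{x. wbX a x \<and> wbX x b} | a b. True} W"
    using assms(1) unfolding interval_topology_def by (rule openin_topology_generated_by)
  then show ?thesis
    using assms(2)
  proof (induction arbitrary: x rule: generate_topology_on.induct)
    case (Int U V)
    obtain a1 b1 where 1: "x \<in> open_interval a1 b1" "open_interval a1 b1 \<subseteq> U"
      using Int.IH(1) Int.prems by blast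
    obtain a2 b2 where 2: "x \<in> open_interval a2 b2" "open_interval a2 b2 \<subseteq> V"
      using Int.IH(2) Int.prems by blast
    obtain a where a: "a1 \<le> a" "a2 \<le> a" "wbX a x"
      using lower.way_below_upper_bound 1(1) 2(1) unfolding open_interval_def by blast
    obtain b where b: "b \<le> b1" "b \<le> b2" "wbX x b"
      using way_above_lower_bound 1(1) 2(1) unfolding open_interval_def by blast
    have "x \<in> open_interval a b" "open_interval a b \<subseteq> U \<inter> V"
      using a b 1(2) 2(2) open_interval_mono[of a1 a b b1] open_interval_mono[of a2 a b b2]
      unfolding open_interval_def by auto
    then show ?case by blast
  next
    case (UN K)
    then obtain k where "k \<in> K" "x \<in> k" by blast
    then show ?case using UN.IH by blast
  qed (auto simp: open_interval_def)
qed

lemma closedin_atLeast: "closedin interval_topology {x::'a..}"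
proof -
  have "- {x..} = \<Union>{open_interval a b | a b. \<not> x \<le> b}"
  proof (intro equalityI subsetI)
    fix y assume "y \<in> - {x..}"
    then obtain b where "wbX y b" "\<not> x \<le> b"
      using way_above_not_le by auto
    moreover obtain a where "wbX a y"
      using lower.ex_way_below by blast
    ultimately show "y \<in> \<Union>{open_interval a b | a b. \<not> x \<le> b}"
      unfolding open_interval_def by blast
  next
    fix y assume "y \<in> \<Union>{open_interval a b | a b. \<not> x \<le> b}"
    then obtain b where "y \<le> b" "\<not> x \<le> b"
      unfolding open_interval_def using lower.way_below_le by blast
    then show "y \<in> - {x..}"
      by (auto intro: order_trans)
  qed
  then show ?thesis
    unfolding closedin_def topspace_interval_topology Compl_eq_Diff_UNIV[symmetric]
    using openin_open_interval by auto
qed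

lemma closedin_atMost: "closedin interval_topology {..x::'a}"
proof -
  have "- {..x} = \<Union>{open_interval a b | a b. \<not> a \<le> x}"
  proof (intro equalityI subsetI)
    fix y assume "y \<in> - {..x}"
    then obtain a where "wbX a y" "\<not> a \<le> x"
      using lower.way_below_not_le by auto
    moreover obtain b where "wbX y b"
      using ex_way_above by blast
    ultimately show "y \<in> \<Union>{open_interval a b | a b. \<not> a \<le> x}"
      unfolding open_interval_def by blast
  next
    fix y assume "y \<in> \<Union>{open_interval a b | a b. \<not> a \<le> x}"
    then obtain a where "a \<le> y" "\<not> a \<le> x"
      unfolding open_interval_def using lower.way_below_le by blast
    then show "y \<in> - {..x}"
      by (auto intro: order_trans)
  qed
  then show ?thesis
    unfolding closedin_def topspace_interval_topology Compl_eq_Diff_UNIV[symmetric]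
    using openin_open_interval by auto
qed

end

locale globally_hyperbolic_order = bicontinuous_order T for T :: "'a::order itself" +
  assumes compactin_Icc: "compactin interval_topology {a..b::'a}"
begin

lemma directed_bounded_has_sup:
  assumes "directed UNIV (\<le>) S" "\<forall>s\<in>S. s \<le> b"
  shows "\<exists>x::'a. is_sup UNIV (\<le>) S x"
proof (rule order.bounded_directed_has_sup[OF assms, where X = interval_topology])
  show "closedin interval_topology {z. x \<le> z}" "closedin interval_topology {z. z \<le> x}" for x :: 'a
    using closedin_atLeast closedin_atMost by (simp_all add: atLeast_def atMost_def)
  show "compactin interval_topology {z. x \<le> z \<and> z \<le> y}" for x y :: 'a
    using compactin_Icc[of x y] by (simp add: atLeastAtMost_def atLeast_def atMost_def Collect_conj_eq)
qed

lemma filtered_bounded_has_inf: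
  assumes "filtered UNIV (\<le>) S" "\<forall>s\<in>S. b \<le> s"
  shows "\<exists>x::'a. is_inf UNIV (\<le>) S x"
proof -
  have "\<exists>x. is_sup UNIV (\<ge>) S x"
  proof (rule upper.bounded_directed_has_sup[where X = interval_topology])
    show "directed UNIV (\<ge>) S" "\<forall>s\<in>S. s \<ge> b"
      using assms by (simp_all add: directed_converse)
    show "closedin interval_topology {z. x \<ge> z}" "closedin interval_topology {z. z \<ge> x}" for x :: 'a
      using closedin_atLeast closedin_atMost by (simp_all add: atLeast_def atMost_def)
    show "compactin interval_topology {z. x \<ge> z \<and> z \<ge> y}" for x y :: 'a
      using compactin_Icc[of y x] by (simp add: atLeastAtMost_def atLeast_def atMost_def Collect_conj_eq Int_commute)
  qed
  then show ?thesis by (simp add: is_sup_converse)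
qed

end

section \<open>The interval domain\<close>

lemma IX_iff: "I \<in> IX \<longleftrightarrow> (\<exists>a b. a \<le> b \<and> I = {a..b})"
  unfolding IX_def by blast

lemma Icc_in_IX: "a \<le> b \<Longrightarrow> {a..b} \<in> IX"
  unfolding IX_def by blast

lemma rev_incl_Icc_iff: "c \<le> d \<Longrightarrow> rev_incl {a..b} {c..d} \<longleftrightarrow> a \<le> c \<and> d \<le> (b::'a::order)"
  unfolding rev_incl_def by auto

lemma is_sup_IX_unique: "is_sup IX rev_incl D s \<Longrightarrow> is_sup IX rev_incl D t \<Longrightarrow> s = t"
  using is_sup_unique[of IX rev_incl D s t] unfolding rev_incl_def by blast

definition lower_ends :: "'a::order set set \<Rightarrow> 'a set" where
  "lower_ends D = {a. \<exists>b. a \<le> b \<and> {a..b} \<in> D}"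

definition upper_ends :: "'a::order set set \<Rightarrow> 'a set" where
  "upper_ends D = {b. \<exists>a. a \<le> b \<and> {a..b} \<in> D}"

lemma directed_IX_ex_Icc: "directed IX rev_incl D \<Longrightarrow> \<exists>a b. a \<le> b \<and> {a..b} \<in> D"
  unfolding directed_def IX_def by blast

lemma directed_IX_Icc_refine:
  assumes D: "directed IX rev_incl D" and "{a..b} \<in> D" "{c..d} \<in> D" "a \<le> b" "c \<le> d"
  shows "\<exists>u v. u \<le> v \<and> {u..v} \<in> D \<and> a \<le> u \<and> c \<le> u \<and> v \<le> b \<and> v \<le> (d::'a::order)"
proof -
  obtain K where K: "K \<in> D" "rev_incl {a..b} K" "rev_incl {c..d} K"
    using D assms(2,3) unfolding directed_def by blast
  moreover have "K \<in> IX"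
    using D K(1) unfolding directed_def by blast
  then obtain u v where "u \<le> v" "K = {u..v}"
    unfolding IX_iff by blast
  ultimately show ?thesis
    using rev_incl_Icc_iff by (metis order.trans)
qed

lemma directed_IX_between_ends:
  assumes "directed IX rev_incl D" "a \<in> lower_ends D" "b \<in> upper_ends D"
  shows "\<exists>u v. u \<le> v \<and> {u..v} \<in> D \<and> a \<le> u \<and> v \<le> b"
proof -
  obtain a' b' where "a \<le> b'" "{a..b'} \<in> D" "a' \<le> b" "{a'..b} \<in> D"
    using assms(2,3) unfolding lower_ends_def upper_ends_def by blast
  then show ?thesis
    using directed_IX_Icc_refine[OF assms(1), of a b' a' b] by blast
qed

lemma directed_lower_ends:
  assumes D: "directed IX rev_incl D"
  shows "directed UNIV (\<le>) (lower_ends D)"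
  unfolding directed_def
proof (intro conjI ballI)
  obtain a b where "a \<le> b" "{a..b} \<in> D"
    using directed_IX_ex_Icc[OF D] by blast
  then show "lower_ends D \<noteq> {}"
    unfolding lower_ends_def by blast
next
  fix a1 a2 assume "a1 \<in> lower_ends D" "a2 \<in> lower_ends D"
  then obtain b1 b2 where "a1 \<le> b1" "{a1..b1} \<in> D" "a2 \<le> b2" "{a2..b2} \<in> D"
    unfolding lower_ends_def by blast
  then obtain u v where "u \<le> v" "{u..v} \<in> D" "a1 \<le> u" "a2 \<le> u"
    using directed_IX_Icc_refine[OF D, of a1 b1 a2 b2] by blast
  then show "\<exists>u\<in>lower_ends D. a1 \<le> u \<and> a2 \<le> u"
    unfolding lower_ends_def by blast
qed simp

lemma filtered_upper_ends:
  assumes D: "directed IX rev_incl D"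
  shows "filtered UNIV (\<le>) (upper_ends D)"
  unfolding filtered_def
proof (intro conjI ballI)
  obtain a b where "a \<le> b" "{a..b} \<in> D"
    using directed_IX_ex_Icc[OF D] by blast
  then show "upper_ends D \<noteq> {}"
    unfolding upper_ends_def by blast
next
  fix b1 b2 assume "b1 \<in> upper_ends D" "b2 \<in> upper_ends D"
  then obtain a1 a2 where "a1 \<le> b1" "{a1..b1} \<in> D" "a2 \<le> b2" "{a2..b2} \<in> D"
    unfolding upper_ends_def by blast
  then obtain u v where "u \<le> v" "{u..v} \<in> D" "v \<le> b1" "v \<le> b2"
    using directed_IX_Icc_refine[OF D, of a1 b1 a2 b2] by blast
  then show "\<exists>v\<in>upper_ends D. v \<le> b1 \<and> v \<le> b2"
    unfolding upper_ends_def by blast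
qed simp

lemma is_sup_IX_ends:
  assumes "D \<subseteq> IX" and x: "is_sup UNIV (\<le>) (lower_ends D) x"
    and y: "is_inf UNIV (\<le>) (upper_ends D) y" and "x \<le> y"
  shows "is_sup IX rev_incl D {x..y}"
  unfolding is_sup_def
proof (intro conjI ballI impI)
  show "{x..y} \<in> IX" using \<open>x \<le> y\<close> by (rule Icc_in_IX)
next
  fix I assume "I \<in> D"
  moreover from this have "I \<in> IX" using assms(1) by blast
  then obtain a b where ab: "a \<le> b" "I = {a..b}" unfolding IX_iff by blast
  ultimately have "a \<in> lower_ends D" "b \<in> upper_ends D"
    unfolding lower_ends_def upper_ends_def by auto
  then have "a \<le> x" "y \<le> b"
    using x y unfolding is_sup_def is_inf_def by auto
  then show "rev_incl I {x..y}"
    using ab(2) \<open>x \<le> y\<close> by (simp add: rev_incl_Icc_iff)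
next
  fix J assume "J \<in> IX" "\<forall>I\<in>D. rev_incl I J"
  then obtain c d where cd: "c \<le> d" "J = {c..d}" "\<forall>I\<in>D. rev_incl I {c..d}"
    unfolding IX_iff by blast
  have "a \<le> c" if "a \<in> lower_ends D" for a
    using that cd(3) unfolding lower_ends_def by (auto simp: rev_incl_Icc_iff[OF cd(1)])
  moreover have "d \<le> b" if "b \<in> upper_ends D" for b
    using that cd(3) unfolding upper_ends_def by (auto simp: rev_incl_Icc_iff[OF cd(1)])
  ultimately have "x \<le> c" "d \<le> y"
    using x y unfolding is_sup_def is_inf_def by auto
  then show "rev_incl {x..y} J"
    using cd(1,2) by (simp add: rev_incl_Icc_iff)
qed

context
  fixes c d :: "'a::order" and C E :: "'a set"
  assumes "c \<le> d" and C: "directed UNIV (\<le>) C" "is_sup UNIV (\<le>) C c"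
    and E: "filtered UNIV (\<le>) E" "is_inf UNIV (\<le>) E d"
begin

lemma Icc_approximant_bounds:
  assumes "p \<in> C" "q \<in> E"
  shows "p \<le> c" "d \<le> q" "p \<le> q"
proof -
  show "p \<le> c" "d \<le> q"
    using C(2) E(2) assms unfolding is_sup_def is_inf_def by auto
  then show "p \<le> q"
    using \<open>c \<le> d\<close> by (meson order.trans)
qed

lemma directed_Icc_approximants: "directed IX rev_incl {{p..q} | p q. p \<in> C \<and> q \<in> E}"
  (is "directed IX rev_incl ?S")
  unfolding directed_def
proof (intro conjI ballI)
  show "?S \<subseteq> IX"
    using Icc_approximant_bounds(3) Icc_in_IX by blast
  show "?S \<noteq> {}"
    using C(1) E(1) unfolding directed_def filtered_def by blast
next
  fix I J assume "I \<in> ?S" "J \<in> ?S"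
  then obtain p q p' q' where IJ: "I = {p..q}" "J = {p'..q'}" "p \<in> C" "q \<in> E" "p' \<in> C" "q' \<in> E"
    by blast
  obtain p'' where p'': "p'' \<in> C" "p \<le> p''" "p' \<le> p''"
    using C(1) IJ(3,5) unfolding directed_def by blast
  obtain q'' where q'': "q'' \<in> E" "q'' \<le> q" "q'' \<le> q'"
    using E(1) IJ(4,6) unfolding filtered_def by blast
  have "{p''..q''} \<in> ?S"
    using p'' q'' by blast
  moreover have "rev_incl I {p''..q''}" "rev_incl J {p''..q''}"
    using IJ(1,2) p'' q'' Icc_approximant_bounds(3)[OF p''(1) q''(1)]
    by (simp_all add: rev_incl_Icc_iff)
  ultimately show "\<exists>K\<in>?S. rev_incl I K \<and> rev_incl J K"
    by blast
qed

lemma is_sup_Icc_approximants: "is_sup IX rev_incl {{p..q} | p q. p \<in> C \<and> q \<in> E} {c..d}"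
  (is "is_sup IX rev_incl ?S {c..d}")
  unfolding is_sup_def
proof (intro conjI ballI impI)
  show "{c..d} \<in> IX" using \<open>c \<le> d\<close> by (rule Icc_in_IX)
next
  fix I assume "I \<in> ?S"
  then obtain p q where "I = {p..q}" "p \<in> C" "q \<in> E"
    by blast
  then show "rev_incl I {c..d}"
    using Icc_approximant_bounds \<open>c \<le> d\<close> by (simp add: rev_incl_Icc_iff)
next
  fix J assume J: "J \<in> IX" "\<forall>I\<in>?S. rev_incl I J"
  then obtain x y where xy: "x \<le> y" "J = {x..y}"
    unfolding IX_iff by blast
  have "p \<le> x \<and> y \<le> q" if "p \<in> C" "q \<in> E" for p q
  proof -
    have "rev_incl {p..q} J"
      using J(2) that by blast
    then show ?thesis
      using xy by (simp add: rev_incl_Icc_iff)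
  qed
  moreover obtain p0 q0 where "p0 \<in> C" "q0 \<in> E"
    using C(1) E(1) unfolding directed_def filtered_def by blast
  ultimately have "c \<le> x" "y \<le> d"
    using C(2) E(2) unfolding is_sup_def is_inf_def by blast+
  then show "rev_incl {c..d} J"
    using xy by (simp add: rev_incl_Icc_iff)
qed

lemmas Icc_approximants = directed_Icc_approximants is_sup_Icc_approximants

end

context globally_hyperbolic_order
begin

lemma directed_IX_has_sup:
  assumes D: "directed IX rev_incl D"
  obtains x y :: 'a where "x \<le> y" "is_sup UNIV (\<le>) (lower_ends D) x"
    "is_inf UNIV (\<le>) (upper_ends D) y" "is_sup IX rev_incl D {x..y}"
proof -
  have ends_le: "a \<le> b" if "a \<in> lower_ends D" "b \<in> upper_ends D" for a b
    using directed_IX_between_ends[OF D that] by (metis order.trans)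
  obtain a0 b0 where "a0 \<le> b0" "{a0..b0} \<in> D"
    using directed_IX_ex_Icc[OF D] by blast
  then have "a0 \<in> lower_ends D" "b0 \<in> upper_ends D"
    unfolding lower_ends_def upper_ends_def by blast+
  then obtain x y where x: "is_sup UNIV (\<le>) (lower_ends D) x" and y: "is_inf UNIV (\<le>) (upper_ends D) y"
    using directed_bounded_has_sup[OF directed_lower_ends[OF D]]
      filtered_bounded_has_inf[OF filtered_upper_ends[OF D]] ends_le by meson
  have "x \<le> b" if "b \<in> upper_ends D" for b
    using x ends_le that unfolding is_sup_def by blast
  then have "x \<le> y"
    using y unfolding is_inf_def by blast
  moreover have "D \<subseteq> IX"
    using D unfolding directed_def by blast
  ultimately show ?thesis
    using that x y is_sup_IX_ends by blast
qed

lemma way_below_IX_if: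
  assumes ac: "wbX a c" and db: "wbX d (b::'a)"
  shows "way_below IX rev_incl {a..b} {c..d}"
  unfolding way_below_def
proof (intro allI impI, elim conjE)
  fix D s assume D: "directed IX rev_incl D" "is_sup IX rev_incl D s" "rev_incl {c..d} s"
  obtain x y where xy: "x \<le> y" "is_sup UNIV (\<le>) (lower_ends D) x"
    "is_inf UNIV (\<le>) (upper_ends D) y" "is_sup IX rev_incl D {x..y}"
    using directed_IX_has_sup[OF D(1)] .
  have "c \<le> x" "y \<le> d"
    using D(3) is_sup_IX_unique[OF D(2) xy(4)] xy(1) by (simp_all add: rev_incl_Icc_iff)
  obtain a' where a': "a' \<in> lower_ends D" "a \<le> a'"
    using way_belowD[OF ac directed_lower_ends[OF D(1)] xy(2) \<open>c \<le> x\<close>] by blast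
  obtain b' where b': "b' \<in> upper_ends D" "b' \<le> b"
    using way_below_filteredD[OF db filtered_upper_ends[OF D(1)] xy(3) \<open>y \<le> d\<close>] by blast
  obtain u v where "u \<le> v" "{u..v} \<in> D" "a' \<le> u" "v \<le> b'"
    using directed_IX_between_ends[OF D(1) a'(1) b'(1)] by blast
  moreover have "a \<le> u" "v \<le> b"
    using a'(2) b'(2) calculation(3,4) by (meson order.trans)+
  ultimately have "rev_incl {a..b} {u..v}" "{u..v} \<in> D"
    by (simp_all add: rev_incl_Icc_iff)
  then show "\<exists>K\<in>D. rev_incl {a..b} K"
    by blast
qed

lemma way_below_IX_iff:
  assumes "c \<le> (d::'a)"
  shows "way_below IX rev_incl {a..b} {c..d} \<longleftrightarrow> wbX a c \<and> wbX d b"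
proof
  assume W: "way_below IX rev_incl {a..b} {c..d}"
  define S where "S = {{p..q} | p q. p \<in> wb_down UNIV (\<le>) c \<and> q \<in> wb_up UNIV (\<le>) d}"
  have "directed IX rev_incl S" "is_sup IX rev_incl S {c..d}"
    unfolding S_def using Icc_approximants[OF assms lower.directed_wb_down lower.is_sup_wb_down
        filtered_wb_up is_inf_wb_up] by blast+
  then obtain p q where pq: "wbX p c" "wbX d q" "rev_incl {a..b} {p..q}"
    using way_belowD[OF W] unfolding S_def wb_down_def wb_up_def rev_incl_def by blast
  moreover have "p \<le> q"
    using pq(1,2) assms lower.way_below_le by (meson order.trans)
  ultimately have "a \<le> p" "q \<le> b"
    by (simp_all add: rev_incl_Icc_iff)
  then show "wbX a c \<and> wbX d b"
    using pq(1,2) lower.way_below_mono_left lower.way_below_mono_right by blast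
next
  assume "wbX a c \<and> wbX d b"
  then show "way_below IX rev_incl {a..b} {c..d}"
    using way_below_IX_if by blast
qed

lemma is_basis_IX_Icc:
  assumes dense: "\<And>a x. wbX a x \<Longrightarrow> \<exists>q\<in>Q. wbX a q \<and> wbX q (x::'a)"
  shows "is_basis IX rev_incl {{p..q} | p q. p \<in> Q \<and> q \<in> Q \<and> p \<le> q}"
  unfolding is_basis_def
proof (intro conjI ballI)
  show "{{p..q} | p q. p \<in> Q \<and> q \<in> Q \<and> p \<le> q} \<subseteq> IX"
    using Icc_in_IX by blast
next
  fix J :: "'a set" assume "J \<in> IX"
  then obtain c d where cd: "c \<le> d" "J = {c..d}"
    unfolding IX_iff by blast
  define S where "S = {{p..q} | p q. p \<in> Q \<inter> wb_down UNIV (\<le>) c \<and> q \<in> Q \<inter> wb_up UNIV (\<le>) d}"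
  have "directed IX rev_incl S" "is_sup IX rev_incl S J"
    unfolding S_def cd(2)
    using Icc_approximants[OF cd(1) lower.directed_dense_wb_down[OF dense]
        lower.is_sup_dense_wb_down[OF dense] filtered_dense_wb_up[OF dense]
        is_inf_dense_wb_up[OF dense]] by blast+
  moreover have "S \<subseteq> {{p..q} | p q. p \<in> Q \<and> q \<in> Q \<and> p \<le> q} \<inter> wb_down IX rev_incl J"
  proof
    fix I assume "I \<in> S"
    then obtain p q where I: "I = {p..q}" "p \<in> Q" "q \<in> Q" "wbX p c" "wbX d q"
      unfolding S_def wb_down_def wb_up_def by blast
    moreover have "p \<le> q"
      using I(4,5) cd(1) lower.way_below_le by (meson order.trans)
    ultimately show "I \<in> {{p..q} | p q. p \<in> Q \<and> q \<in> Q \<and> p \<le> q} \<inter> wb_down IX rev_incl J"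
      unfolding wb_down_def cd(2) using way_below_IX_if[OF I(4,5)] Icc_in_IX by blast
  qed
  ultimately show "\<exists>S. S \<subseteq> {{p..q} | p q. p \<in> Q \<and> q \<in> Q \<and> p \<le> q} \<inter> wb_down IX rev_incl J
      \<and> directed IX rev_incl S \<and> is_sup IX rev_incl S J"
    by blast
qed

lemma continuous_dcpo_IX: "continuous_dcpo (IX :: 'a set set) rev_incl"
  unfolding continuous_dcpo_def continuous_poset_def dcpo_def
proof (intro conjI allI impI)
  show "\<exists>B. is_basis (IX :: 'a set set) rev_incl B"
    using is_basis_IX_Icc[of UNIV] lower.way_below_interpolate by blast
next
  fix D :: "'a set set" assume "directed IX rev_incl D"
  then show "\<exists>s. is_sup IX rev_incl D s"
    using directed_IX_has_sup by metis
qed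

lemma is_basis_IX_Icc_between:
  assumes B: "is_basis IX rev_incl B" and ax: "wbX a x" and xb: "wbX x (b::'a)"
  obtains u v where "{u..v} \<in> B" "u \<le> v" "a \<le> u" "v \<le> b" "wbX u x" "wbX x v"
proof -
  have wb: "way_below IX rev_incl {a..b} {x..x}"
    using ax xb by (rule way_below_IX_if)
  obtain D where D: "D \<subseteq> B \<inter> wb_down IX rev_incl {x..x}"
    "directed IX rev_incl D" "is_sup IX rev_incl D {x..x}"
    using B Icc_in_IX[of x x] unfolding is_basis_def by blast
  have "\<exists>K\<in>D. rev_incl {a..b} K"
    using way_belowD[OF wb D(2,3)] by (simp add: rev_incl_def)
  then obtain K where K: "K \<in> D" "rev_incl {a..b} K"
    by blast
  have "K \<in> IX"
    using D(1,2) K(1) unfolding directed_def by blast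
  then obtain u v where uv: "u \<le> v" "K = {u..v}"
    unfolding IX_iff by blast
  have "way_below IX rev_incl {u..v} {x..x}"
    using D(1) K(1) uv(2) unfolding wb_down_def by blast
  then have "wbX u x" "wbX x v"
    using way_below_IX_iff[OF order_refl] by blast+
  moreover have "a \<le> u" "v \<le> b"
    using K(2) uv by (simp_all add: rev_incl_Icc_iff)
  ultimately show ?thesis
    using that D(1) K(1) uv by blast
qed

lemma omega_continuous_IX_imp_second_countable:
  assumes "omega_continuous (IX :: 'a set set) rev_incl"
  shows "second_countable (interval_topology :: 'a topology)"
proof -
  obtain B where B: "countable B" "is_basis (IX :: 'a set set) rev_incl B"
    using assms unfolding omega_continuous_def by blast
  define E where "E = {(u, v). u \<le> v \<and> {u..v} \<in> B}"
  have "countable E"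
  proof (rule countable_image_inj_on)
    show "countable ((\<lambda>(u, v). {u..v}) ` E)"
      using B(1) by (rule countable_subset[rotated]) (auto simp: E_def)
    show "inj_on (\<lambda>(u, v). {u..v}) E"
      unfolding E_def inj_on_def by auto
  qed
  show ?thesis
    unfolding second_countable_def
  proof (intro exI conjI allI impI ballI)
    show "countable ((\<lambda>(u, v). open_interval u v) ` E)"
      using \<open>countable E\<close> by blast
  next
    fix V assume "V \<in> (\<lambda>(u, v). open_interval u v) ` E"
    then show "openin interval_topology V"
      using openin_open_interval by auto
  next
    fix U and x :: 'a assume U: "openin interval_topology U \<and> x \<in> U"
    obtain a b where ab: "x \<in> open_interval a b" "open_interval a b \<subseteq> U"
      using open_interval_neighbourhood[OF conjunct1[OF U] conjunct2[OF U]] by blast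
    then have "wbX a x" "wbX x b"
      unfolding open_interval_def by blast+
    then obtain u v where uv: "{u..v} \<in> B" "u \<le> v" "a \<le> u" "v \<le> b" "wbX u x" "wbX x v"
      by (rule is_basis_IX_Icc_between[OF B(2)])
    then have "(u, v) \<in> E" "x \<in> open_interval u v" "open_interval u v \<subseteq> U"
      using open_interval_mono[OF uv(3,4)] ab(2) unfolding E_def open_interval_def by auto
    then show "\<exists>V\<in>(\<lambda>(u, v). open_interval u v) ` E. x \<in> V \<and> V \<subseteq> U"
      by blast
  qed
qed

lemma second_countable_imp_omega_continuous_IX:
  assumes "second_countable (interval_topology :: 'a topology)"
  shows "omega_continuous (IX :: 'a set set) rev_incl"
proof -
  obtain Q :: "'a set" where Q: "countable Q" "interval_topology closure_of Q = topspace interval_topology"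
    using second_countable_imp_separable_space[OF assms] unfolding separable_space_def by blast
  have dense: "\<exists>q\<in>Q. wbX a q \<and> wbX q x" if ax: "wbX a x" for a x :: 'a
  proof -
    obtain z where "wbX a z" "wbX z x"
      using lower.way_below_interpolate[OF ax] by blast
    then have "open_interval a x \<noteq> {}"
      unfolding open_interval_def by blast
    then have "Q \<inter> open_interval a x \<noteq> {}"
      using Q(2) openin_open_interval unfolding dense_intersects_open by blast
    then show ?thesis
      unfolding open_interval_def by blast
  qed
  have "{{p..q} | p q. p \<in> Q \<and> q \<in> Q \<and> p \<le> q} \<subseteq> (\<lambda>(p, q). {p..q}) ` (Q \<times> Q)"
    by auto
  then have "countable {{p..q} | p q. p \<in> Q \<and> q \<in> Q \<and> p \<le> q}"
    by (rule countable_subset) (simp add: Q(1))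
  then show ?thesis
    unfolding omega_continuous_def using is_basis_IX_Icc[OF dense] by blast
qed

end

section \<open>Maximal elements of the interval domain\<close>

definition Icc_way_inside :: "'a::order set \<Rightarrow> 'a set set" where
  "Icc_way_inside W =
     {{c..d} | a b c d. c \<le> d \<and> wbX a c \<and> wbX d b \<and> open_interval a b \<subseteq> W}"

lemma Icc_way_insideI:
  "wbX a c \<Longrightarrow> wbX d b \<Longrightarrow> c \<le> d \<Longrightarrow> open_interval a b \<subseteq> W \<Longrightarrow> {c..d} \<in> Icc_way_inside W"
  unfolding Icc_way_inside_def by blast

lemma Icc_way_insideE:
  assumes "J \<in> Icc_way_inside W"
  obtains a b c d where "J = {c..d}" "c \<le> d" "wbX a c" "wbX d b" "open_interval a b \<subseteq> W"
  using assms unfolding Icc_way_inside_def by blast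

lemma Icc_way_inside_upward:
  assumes J: "J \<in> Icc_way_inside W" "J' \<in> IX" "rev_incl J J'"
  shows "J' \<in> Icc_way_inside W"
proof -
  obtain a b c d where abcd: "J = {c..d}" "c \<le> d" "wbX a c" "wbX d b" "open_interval a b \<subseteq> W"
    using J(1) by (rule Icc_way_insideE)
  obtain c' d' where cd': "c' \<le> d'" "J' = {c'..d'}"
    using J(2) unfolding IX_iff by blast
  then have "c \<le> c'" "d' \<le> d"
    using J(3) abcd(1) by (simp_all add: rev_incl_Icc_iff)
  then have "wbX a c'" "wbX d' b"
    using order.way_below_mono_right[OF abcd(3)] order.way_below_mono_left[OF _ abcd(4)] by blast+
  then show "J' \<in> Icc_way_inside W"
    unfolding cd'(2) using cd'(1) abcd(5) by (rule Icc_way_insideI)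
qed

lemma topspace_scott_topology: "topspace (scott_topology P le) = P"
proof -
  have "scott_open P le P"
    by (rule scott_openI) (auto simp: directed_def)
  then show ?thesis
    unfolding topspace_def openin_scott_topology scott_open_def by blast
qed

lemma maxel_IX: "maxel (IX :: 'a::order set set) rev_incl = range (\<lambda>x. {x..x})"
proof (intro equalityI subsetI)
  fix J :: "'a set" assume J: "J \<in> maxel IX rev_incl"
  then have "J \<in> IX" and J_max: "\<And>K. K \<in> IX \<Longrightarrow> rev_incl J K \<Longrightarrow> K = J"
    unfolding maxel_def by blast+
  then obtain c d where cd: "c \<le> d" "J = {c..d}"
    unfolding IX_iff by blast
  have "{c..c} \<in> IX"
    by (rule Icc_in_IX) simp
  moreover have "rev_incl J {c..c}"
    using cd by (auto simp: rev_incl_def)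
  ultimately have "J = {c..c}"
    using J_max by metis
  then show "J \<in> range (\<lambda>x. {x..x})" by blast
next
  fix J :: "'a set" assume "J \<in> range (\<lambda>x. {x..x})"
  then obtain x where x: "J = {x..x}" by blast
  have "J \<in> IX"
    unfolding x by (rule Icc_in_IX) simp
  moreover have "K = J" if K: "K \<in> IX" "rev_incl J K" for K
  proof -
    obtain c d where cd: "c \<le> d" "K = {c..d}"
      using K(1) unfolding IX_iff by blast
    have "x \<le> c \<and> d \<le> x"
      using K(2) unfolding x cd(2) rev_incl_Icc_iff[OF cd(1)] .
    then have "c = x" "d = x"
      using cd(1) by auto
    then show "K = J"
      using cd(2) x by blast
  qed
  ultimately show "J \<in> maxel IX rev_incl"
    unfolding maxel_def by blast
qed

context globally_hyperbolic_order
begin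

lemma scott_open_Icc_way_inside: "scott_open IX rev_incl (Icc_way_inside (W :: 'a set))"
proof (rule scott_openI)
  show "Icc_way_inside W \<subseteq> IX"
  proof
    fix J assume "J \<in> Icc_way_inside W"
    then show "J \<in> IX"
      by (rule Icc_way_insideE) (simp add: Icc_in_IX)
  qed
next
  fix J J' assume "J \<in> Icc_way_inside W" "J' \<in> IX" "rev_incl J J'"
  then show "J' \<in> Icc_way_inside W"
    by (rule Icc_way_inside_upward)
next
  fix S s assume S: "directed IX rev_incl S" "is_sup IX rev_incl S s" "s \<in> Icc_way_inside W"
  obtain a b c d where abcd: "s = {c..d}" "c \<le> d" "wbX a c" "wbX d b" "open_interval a b \<subseteq> W"
    using S(3) by (rule Icc_way_insideE)
  obtain z where z: "wbX a z" "wbX z c"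
    using lower.way_below_interpolate[OF abcd(3)] by blast
  obtain z' where z': "wbX d z'" "wbX z' b"
    using way_above_interpolate[OF abcd(4)] by blast
  have "way_below IX rev_incl {z..z'} s"
    unfolding abcd(1) using z(2) z'(1) by (rule way_below_IX_if)
  moreover have "rev_incl s s"
    by (simp add: rev_incl_def)
  ultimately obtain K where K: "K \<in> S" "rev_incl {z..z'} K"
    using way_belowD[OF _ S(1,2)] by blast
  have "K \<in> IX"
    using S(1) K(1) unfolding directed_def by blast
  then obtain u v where uv: "u \<le> v" "K = {u..v}"
    unfolding IX_iff by blast
  then have "z \<le> u" "v \<le> z'"
    using K(2) by (simp_all add: rev_incl_Icc_iff)
  then have "wbX a u" "wbX v b"
    using lower.way_below_mono_right[OF z(1)] lower.way_below_mono_left[OF _ z'(2)] by blast+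
  then have "K \<in> Icc_way_inside W"
    unfolding uv(2) using uv(1) abcd(5) by (rule Icc_way_insideI)
  then show "S \<inter> Icc_way_inside W \<noteq> {}"
    using K(1) by blast
qed

lemma scott_open_IX_open_interval:
  fixes x :: 'a
  assumes V: "scott_open IX rev_incl V" and x: "{x..x} \<in> V"
  obtains p q where "x \<in> open_interval p q" "\<And>z. z \<in> open_interval p q \<Longrightarrow> {z..z} \<in> V"
proof -
  define S where "S = {{p..q} | p q. p \<in> wb_down UNIV (\<le>) x \<and> q \<in> wb_up UNIV (\<le>) x}"
  have "directed IX rev_incl S" "is_sup IX rev_incl S {x..x}"
    unfolding S_def using Icc_approximants[OF order_refl lower.directed_wb_down lower.is_sup_wb_down
        filtered_wb_up is_inf_wb_up] by blast+
  then have "S \<inter> V \<noteq> {}"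
    using scott_openD(3)[OF V] x by blast
  then obtain p q where pq: "wbX p x" "wbX x q" "{p..q} \<in> V"
    unfolding S_def wb_down_def wb_up_def by blast
  have "{z..z} \<in> V" if "z \<in> open_interval p q" for z
  proof -
    have "p \<le> z" "z \<le> q"
      using that lower.way_below_le unfolding open_interval_def by blast+
    then have "rev_incl {p..q} {z..z}"
      unfolding rev_incl_def by auto
    then show ?thesis
      using scott_openD(2)[OF V pq(3)] Icc_in_IX[of z z] by blast
  qed
  moreover have "x \<in> open_interval p q"
    using pq(1,2) unfolding open_interval_def by blast
  ultimately show ?thesis
    using that by blast
qed

lemma continuous_map_Icc_singleton:
  "continuous_map interval_topology (subtopology (scott_topology IX rev_incl) (maxel IX rev_incl))
     (\<lambda>x::'a. {x..x})"
  unfolding continuous_map_in_subtopology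
proof
  show "(\<lambda>x. {x..x}) \<in> topspace interval_topology \<rightarrow> maxel IX rev_incl"
    by (simp add: maxel_IX)
  show "continuous_map interval_topology (scott_topology IX rev_incl) (\<lambda>x::'a. {x..x})"
    unfolding continuous_map_def topspace_scott_topology topspace_interval_topology
  proof (intro conjI allI impI)
    show "(\<lambda>x::'a. {x..x}) \<in> UNIV \<rightarrow> IX"
      using Icc_in_IX by blast
  next
    fix V :: "'a set set" assume "openin (scott_topology IX rev_incl) V"
    then have V: "scott_open IX rev_incl V"
      by (simp add: openin_scott_topology)
    show "openin interval_topology {x \<in> UNIV. {x..x} \<in> V}"
    proof (subst openin_subopen, intro ballI)
      fix x :: 'a assume "x \<in> {x \<in> UNIV. {x..x} \<in> V}"
      then obtain p q where "x \<in> open_interval p q" "\<And>z. z \<in> open_interval p q \<Longrightarrow> {z..z} \<in> V"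
        using scott_open_IX_open_interval[OF V] by blast
      then show "\<exists>T. openin interval_topology T \<and> x \<in> T \<and> T \<subseteq> {x \<in> UNIV. {x..x} \<in> V}"
        using openin_open_interval by blast
    qed
  qed
qed

lemma open_map_Icc_singleton:
  "open_map interval_topology (subtopology (scott_topology IX rev_incl) (maxel IX rev_incl))
     (\<lambda>x::'a. {x..x})"
  unfolding open_map_def openin_subtopology openin_scott_topology
proof (intro allI impI)
  fix W :: "'a set" assume W: "openin interval_topology W"
  have "(\<lambda>x. {x..x}) ` W = Icc_way_inside W \<inter> maxel IX rev_incl"
  proof (intro equalityI subsetI)
    fix J assume "J \<in> (\<lambda>x. {x..x}) ` W"
    then obtain x where x: "x \<in> W" "J = {x..x}"
      by blast
    obtain a b where ab: "x \<in> open_interval a b" "open_interval a b \<subseteq> W"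
      using open_interval_neighbourhood[OF W x(1)] by blast
    then have "wbX a x" "wbX x b"
      unfolding open_interval_def by blast+
    then have "J \<in> Icc_way_inside W"
      unfolding x(2) using order_refl ab(2) by (rule Icc_way_insideI)
    then show "J \<in> Icc_way_inside W \<inter> maxel IX rev_incl"
      unfolding maxel_IX x(2) by blast
  next
    fix J assume J: "J \<in> Icc_way_inside W \<inter> maxel IX rev_incl"
    then obtain x where x: "J = {x..x}"
      unfolding maxel_IX by blast
    obtain a b c d where abcd: "J = {c..d}" "c \<le> d" "wbX a c" "wbX d b" "open_interval a b \<subseteq> W"
      using J by (blast elim: Icc_way_insideE)
    have "{c..d} = {x..x}"
      using trans[OF sym[OF abcd(1)] x] .
    then have "c = x" "d = x"
      using abcd(2) unfolding Icc_eq_Icc by blast+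
    then have "x \<in> W"
      using abcd(3-5) unfolding open_interval_def by blast
    then show "J \<in> (\<lambda>x. {x..x}) ` W"
      using x by blast
  qed
  then show "\<exists>V. scott_open IX rev_incl V \<and> (\<lambda>x. {x..x}) ` W = V \<inter> maxel IX rev_incl"
    using scott_open_Icc_way_inside by blast
qed

lemma homeomorphic_map_Icc_singleton:
  "homeomorphic_map interval_topology (subtopology (scott_topology IX rev_incl) (maxel IX rev_incl))
     (\<lambda>x::'a. {x..x})"
proof (rule bijective_open_imp_homeomorphic_map[OF continuous_map_Icc_singleton open_map_Icc_singleton])
  show "(\<lambda>x::'a. {x..x}) ` topspace interval_topology
      = topspace (subtopology (scott_topology IX rev_incl) (maxel IX rev_incl))"
  proof -
    have "maxel IX rev_incl \<subseteq> (IX :: 'a set set)"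
      unfolding maxel_def by blast
    then have "topspace (subtopology (scott_topology IX rev_incl) (maxel IX rev_incl))
        = range (\<lambda>x::'a. {x..x})"
      by (simp add: topspace_scott_topology Int_absorb1 maxel_IX)
    then show ?thesis
      by (simp add: topspace_interval_topology)
  qed
  show "inj_on (\<lambda>x::'a. {x..x}) (topspace interval_topology)"
    by (simp add: inj_on_def)
qed

end

theorem mainTheorem3:
  assumes "globally_hyperbolic TYPE('a::order)"
  shows "continuous_dcpo (IX :: 'a set set) rev_incl
    \<and> (\<forall>a b c d :: 'a. a \<le> b \<longrightarrow> c \<le> d \<longrightarrow>
          (way_below IX rev_incl {a..b} {c..d} \<longleftrightarrow> wbX a c \<and> wbX d b))
    \<and> (second_countable (interval_topology :: 'a topology) \<longleftrightarrow> omega_continuous (IX :: 'a set set) rev_incl)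
    \<and> homeomorphic_map (interval_topology :: 'a topology)
        (subtopology (scott_topology IX rev_incl) (maxel IX rev_incl)) (\<lambda>x. {x..x})"
proof -
  interpret globally_hyperbolic_order "TYPE('a)"
    using assms unfolding globally_hyperbolic_def by unfold_locales blast+
  show ?thesis
    using continuous_dcpo_IX way_below_IX_iff omega_continuous_IX_imp_second_countable
      second_countable_imp_omega_continuous_IX homeomorphic_map_Icc_singleton by blast
qed

end
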